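(* None of the 20 rules of BOOL can be omitted in the Characterization Theorem: for each rule $r$ of BOOL there is a non-failed Boolean CSP that is closed under the applications of all rules of BOOL other than $r$ but is not hyper-arc consistent. For instance, for $r=$ AND4, the CSP $\langle x\wedge y=z;\ x=0,\ y\in\{0,1\},\ z\in\{0,1\}\rangle$ is such a CSP.
   Context: A Boolean CSP is $\langle \mathcal C; x_1\in D_1,\dots,x_n\in D_n\rangle$ with $D_i\subseteq\{0,1\}$ and $\mathcal C$ a finite set of Boolean constraints, each of one of the forms $u=v$ (relation $\{(0,0),(1,1)\}$), $\neg u=v$ ($\{(0,1),(1,0)\}$), $u\wedge v=w$ ($\{(0,0,0),(0,1,0),(1,0,0),(1,1,1)\}$), $u\vee v=w$ ($\{(0,0,0),(0,1,1),(1,0,1),(1,1,1)\}$) on distinct variables; each constraint is understood as restricted to the current domains. We write $x=d$ for $x\in\{d\}$. A CSP is failed if some domain is empty. A constraint is solved if it equals the product of the domains of its variables. $\phi$ is a reformulation of $\psi$ if removing solved constraints from both yields the same CSP. The proof system BOOL consists of the rules (constraint, premise $\rightarrow$ conclusion; $x,y,z$ schematic): EQU1: $x=y$, $x=1\rightarrow y=1$; EQU2: $x=y$, $y=1\rightarrow x=1$; EQU3: $x=y$, $x=0\rightarrow y=0$; EQU4: $x=y$, $y=0\rightarrow x=0$; NOT1: $\neg x=y$, $x=1\rightarrow y=0$; NOT2: $\neg x=y$, $x=0\rightarrow y=1$; NOT3: $\neg x=y$, $y=1\rightarrow x=0$; NOT4: $\neg x=y$, $y=0\rightarrow x=1$;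 AND1: $x\wedge y=z$, $x=1,y=1\rightarrow z=1$; AND2: $x\wedge y=z$, $x=1,z=0\rightarrow y=0$; AND3: $x\wedge y=z$, $y=1,z=0\rightarrow x=0$; AND4: $x\wedge y=z$, $x=0\rightarrow z=0$; AND5: $x\wedge y=z$, $y=0\rightarrow z=0$; AND6: $x\wedge y=z$, $z=1\rightarrow x=1,y=1$; OR1: $x\vee y=z$, $x=1\rightarrow z=1$; OR2: $x\vee y=z$, $x=0,y=0\rightarrow z=0$; OR3: $x\vee y=z$, $x=0,z=1\rightarrow y=1$; OR4: $x\vee y=z$, $y=0,z=1\rightarrow x=1$; OR5: $x\vee y=z$, $y=1\rightarrow z=1$; OR6: $x\vee y=z$, $z=0\rightarrow x=0,y=0$. On CSPs, such a rule with constraint $c$, premise $X=s$, conclusion $Y=t$ acts as: applicable to a CSP containing (an instance of) $c$ in which each variable of $X$ has domain exactly $\{s_i\}$; the result removes $c$ and replaces the domain $D$ of each variable $y_j$ of $Y$ by $D\cap\{t_j\}$. An application is relevant if its result is not a reformulation of the original CSP. A CSP is closed under the applications of a rule $R$ if $R$ cannot be applied to it or no application of it is relevant. A constraint is hyper-arc consistent if for every variable of it each value in its domain participates in a solution to the constraint; a CSP is hyper-arc consistent if every constraint of it is. *)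

theory Defs
  imports Main
begin

text \<open>Boolean values: 0 is False, 1 is True. Variables are natural numbers.\<close>

datatype ctype = CEq | CNot | CAnd | COr

type_synonym constr = "ctype \<times> nat list"

fun arity :: "ctype \<Rightarrow> nat" where
  "arity CEq = 2" | "arity CNot = 2" | "arity CAnd = 3" | "arity COr = 3"

fun crel :: "ctype \<Rightarrow> bool list set" where
  "crel CEq = {[a, b] | a b. a = b}"
| "crel CNot = {[a, b] | a b. b = (\<not> a)}"
| "crel CAnd = {[a, b, c] | a b c. c = (a \<and> b)}"
| "crel COr = {[a, b, c] | a b c. c = (a \<or> b)}"

definition wf_constr :: "constr \<Rightarrow> bool" where
  "wf_constr c \<longleftrightarrow> length (snd c) = arity (fst c) \<and> distinct (snd c)"

record csp =
  vars :: "nat set"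
  cons :: "constr set"
  dom  :: "nat \<Rightarrow> bool set"

definition wf_csp :: "csp \<Rightarrow> bool" where
  "wf_csp P \<longleftrightarrow> finite (vars P) \<and> finite (cons P) \<and>
     (\<forall>c \<in> cons P. wf_constr c \<and> set (snd c) \<subseteq> vars P)"

definition failed :: "csp \<Rightarrow> bool" where
  "failed P \<longleftrightarrow> (\<exists>x \<in> vars P. dom P x = {})"

definition dom_tuples :: "(nat \<Rightarrow> bool set) \<Rightarrow> constr \<Rightarrow> bool list set" where
  "dom_tuples D c = {t. length t = length (snd c) \<and>
      (\<forall>i < length (snd c). t ! i \<in> D (snd c ! i))}"

definition solved :: "(nat \<Rightarrow> bool set) \<Rightarrow> constr \<Rightarrow> bool" where
  "solved D c \<longleftrightarrow> crel (fst c) \<inter> dom_tuples D c = dom_tuples D c"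

definition remove_solved :: "csp \<Rightarrow> csp" where
  "remove_solved P = P\<lparr>cons := {c \<in> cons P. \<not> solved (dom P) c}\<rparr>"

definition reformulation :: "csp \<Rightarrow> csp \<Rightarrow> bool" where
  "reformulation \<phi> \<psi> \<longleftrightarrow> remove_solved \<phi> = remove_solved \<psi>"

datatype rule =
  EQU1 | EQU2 | EQU3 | EQU4
| NOT1 | NOT2 | NOT3 | NOT4
| AND1 | AND2 | AND3 | AND4 | AND5 | AND6
| OR1 | OR2 | OR3 | OR4 | OR5 | OR6

text \<open>Rule specification: constraint kind, premise (position, value) list and
  conclusion (position, value) list; positions 0,1,2 stand for the schematic x,y,z.\<close>
fun rule_spec :: "rule \<Rightarrow> ctype \<times> (nat \<times> bool) list \<times> (nat \<times> bool) list" where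
  "rule_spec EQU1 = (CEq, [(0, True)], [(1, True)])"
| "rule_spec EQU2 = (CEq, [(1, True)], [(0, True)])"
| "rule_spec EQU3 = (CEq, [(0, False)], [(1, False)])"
| "rule_spec EQU4 = (CEq, [(1, False)], [(0, False)])"
| "rule_spec NOT1 = (CNot, [(0, True)], [(1, False)])"
| "rule_spec NOT2 = (CNot, [(0, False)], [(1, True)])"
| "rule_spec NOT3 = (CNot, [(1, True)], [(0, False)])"
| "rule_spec NOT4 = (CNot, [(1, False)], [(0, True)])"
| "rule_spec AND1 = (CAnd, [(0, True), (1, True)], [(2, True)])"
| "rule_spec AND2 = (CAnd, [(0, True), (2, False)], [(1, False)])"
| "rule_spec AND3 = (CAnd, [(1, True), (2, False)], [(0, False)])"
| "rule_spec AND4 = (CAnd, [(0, False)], [(2, False)])"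
| "rule_spec AND5 = (CAnd, [(1, False)], [(2, False)])"
| "rule_spec AND6 = (CAnd, [(2, True)], [(0, True), (1, True)])"
| "rule_spec OR1 = (COr, [(0, True)], [(2, True)])"
| "rule_spec OR2 = (COr, [(0, False), (1, False)], [(2, False)])"
| "rule_spec OR3 = (COr, [(0, False), (2, True)], [(1, True)])"
| "rule_spec OR4 = (COr, [(1, False), (2, True)], [(0, True)])"
| "rule_spec OR5 = (COr, [(1, True)], [(2, True)])"
| "rule_spec OR6 = (COr, [(2, False)], [(0, False), (1, False)])"

definition applicable :: "rule \<Rightarrow> constr \<Rightarrow> csp \<Rightarrow> bool" where
  "applicable r c P \<longleftrightarrow> (case rule_spec r of (k, prem, concl) \<Rightarrow>
      c \<in> cons P \<and> fst c = k \<and>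
      (\<forall>(i, s) \<in> set prem. dom P (snd c ! i) = {s}))"

definition apply_rule :: "rule \<Rightarrow> constr \<Rightarrow> csp \<Rightarrow> csp" where
  "apply_rule r c P = (case rule_spec r of (k, prem, concl) \<Rightarrow>
      P\<lparr>cons := cons P - {c},
        dom := (\<lambda>x. {d \<in> dom P x. \<forall>(j, t) \<in> set concl. snd c ! j = x \<longrightarrow> d = t})\<rparr>)"

definition relevant :: "rule \<Rightarrow> constr \<Rightarrow> csp \<Rightarrow> bool" where
  "relevant r c P \<longleftrightarrow> \<not> reformulation (apply_rule r c P) P"

definition closed_under :: "rule \<Rightarrow> csp \<Rightarrow> bool" where
  "closed_under r P \<longleftrightarrow> (\<forall>c. applicable r c P \<longrightarrow> \<not> relevant r c P)"

definition hyper_arc_consistent :: "csp \<Rightarrow> bool" where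
  "hyper_arc_consistent P \<longleftrightarrow> (\<forall>c \<in> cons P. \<forall>i < length (snd c). \<forall>d \<in> dom P (snd c ! i).
      \<exists>t \<in> crel (fst c) \<inter> dom_tuples (dom P) c. t ! i = d)"

end

theory Submission
  imports Defs
begin

text \<open>The witness for a rule \<open>r\<close> has a single constraint of the kind of \<open>r\<close> on the variables
  0, 1, 2 (playing x, y, z), and fixes exactly the premise variables of \<open>r\<close> to their premise
  values. Premises of distinct rules of the same kind are never contained in one another, so
  no other rule is applicable. Since \<open>r\<close> is sound, the value its conclusion excludes has no
  support, although it is still in its domain: the CSP is not hyper-arc consistent.\<close>

definition rule_kind :: "rule \<Rightarrow> ctype" where
  "rule_kind r = fst (rule_spec r)"

definition rule_premise :: "rule \<Rightarrow> (nat \<times> bool) list" where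
  "rule_premise r = fst (snd (rule_spec r))"

definition rule_conclusion :: "rule \<Rightarrow> (nat \<times> bool) list" where
  "rule_conclusion r = snd (snd (rule_spec r))"

lemma rule_spec_split: "rule_spec r = (rule_kind r, rule_premise r, rule_conclusion r)"
  by (simp add: rule_kind_def rule_premise_def rule_conclusion_def)

lemma applicable_iff:
  "applicable r c P \<longleftrightarrow> c \<in> cons P \<and> fst c = rule_kind r \<and>
     (\<forall>(i, s) \<in> set (rule_premise r). dom P (snd c ! i) = {s})"
  unfolding applicable_def rule_spec_split by simp

lemma rule_premise_wf:
  "distinct (map fst (rule_premise r)) \<and> (\<forall>(i, s) \<in> set (rule_premise r). i < arity (rule_kind r))"
  by (cases r) (simp_all add: rule_kind_def rule_premise_def)

lemma rule_conclusion_outside_premise: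
  "\<exists>(j, v) \<in> set (rule_conclusion r). j < arity (rule_kind r) \<and> j \<notin> fst ` set (rule_premise r)"
  by (cases r) (simp_all add: rule_kind_def rule_premise_def rule_conclusion_def)

lemma rule_sound:
  assumes "t \<in> crel (rule_kind r)" "\<forall>(i, s) \<in> set (rule_premise r). t ! i = s"
    and "(j, v) \<in> set (rule_conclusion r)"
  shows "t ! j = v"
  using assms by (cases r) (auto simp: rule_kind_def rule_premise_def rule_conclusion_def)

lemma rule_premise_subset_imp_eq:
  assumes "rule_kind r' = rule_kind r" "set (rule_premise r') \<subseteq> set (rule_premise r)"
  shows "r' = r"
  using assms by (cases r; cases r') (simp_all add: rule_kind_def rule_premise_def)

lemma solved_supports:
  assumes "solved D c" "\<forall>x \<in> set (snd c). D x \<noteq> {}"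
    and "i < length (snd c)" "d \<in> D (snd c ! i)"
  shows "\<exists>t \<in> crel (fst c) \<inter> dom_tuples D c. t ! i = d"
proof -
  define t where
    "t = map (\<lambda>j. if j = i then d else (SOME e. e \<in> D (snd c ! j))) [0..<length (snd c)]"
  have "t \<in> dom_tuples D c"
    unfolding dom_tuples_def t_def using assms(2,4) by (auto simp: some_in_eq)
  moreover have "t ! i = d"
    using assms(3) by (simp add: t_def)
  ultimately show ?thesis
    using assms(1) unfolding solved_def by blast
qed

lemma hyper_arc_consistent_if_solved:
  assumes "wf_csp P" "\<not> failed P" "\<forall>c \<in> cons P. solved (dom P) c"
  shows "hyper_arc_consistent P"
  unfolding hyper_arc_consistent_def
proof (intro ballI allI impI)
  fix c i d
  assume "c \<in> cons P" "i < length (snd c)" "d \<in> dom P (snd c ! i)"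
  moreover from \<open>c \<in> cons P\<close> assms(1,2) have "\<forall>x \<in> set (snd c). dom P x \<noteq> {}"
    unfolding wf_csp_def failed_def by blast
  ultimately show "\<exists>t \<in> crel (fst c) \<inter> dom_tuples (dom P) c. t ! i = d"
    using assms(3) solved_supports by blast
qed

text \<open>An application always removes its constraint, so it is relevant as soon as that
  constraint is unsolved.\<close>

lemma closed_under_single_unsolved:
  assumes "cons P = {c}" "\<not> solved (dom P) c"
  shows "closed_under r P \<longleftrightarrow> \<not> applicable r c P"
proof -
  have "relevant r c P" if "applicable r c P"
  proof -
    have "c \<in> cons (remove_solved P)"
      using assms by (simp add: remove_solved_def)
    moreover have "c \<notin> cons (remove_solved (apply_rule r c P))"
      by (simp add: remove_solved_def apply_rule_def split: prod.splits)
    ultimately show ?thesis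
      unfolding relevant_def reformulation_def by metis
  qed
  moreover have "c' = c" if "applicable r c' P" for c'
    using that assms(1) by (simp add: applicable_iff)
  ultimately show ?thesis
    unfolding closed_under_def by blast
qed

definition premise_domain :: "rule \<Rightarrow> nat \<Rightarrow> bool set" where
  "premise_domain r x = (case map_of (rule_premise r) x of Some s \<Rightarrow> {s} | None \<Rightarrow> UNIV)"

definition witness_constr :: "rule \<Rightarrow> constr" where
  "witness_constr r = (rule_kind r, [0..<arity (rule_kind r)])"

definition witness_csp :: "rule \<Rightarrow> csp" where
  "witness_csp r = \<lparr>vars = {0, 1, 2}, cons = {witness_constr r}, dom = premise_domain r\<rparr>"

lemma arity_le_3: "arity k \<le> 3"
  by (cases k) simp_all

lemma witness_csp_wf: "wf_csp (witness_csp r)"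
  using arity_le_3 [of "rule_kind r"]
  by (auto simp: wf_csp_def wf_constr_def witness_csp_def witness_constr_def)

lemma witness_csp_not_failed: "\<not> failed (witness_csp r)"
  by (auto simp: failed_def witness_csp_def premise_domain_def split: option.splits)

lemma premise_domain_singleton:
  assumes "premise_domain r i = {s}"
  shows "(i, s) \<in> set (rule_premise r)"
proof (cases "map_of (rule_premise r) i")
  case None
  with assms have "(\<not> s) \<in> {s}"
    by (simp add: premise_domain_def)
  then show ?thesis
    by simp
next
  case (Some s')
  with assms show ?thesis
    by (simp add: premise_domain_def map_of_SomeD)
qed

lemma witness_csp_only_applicable:
  assumes "applicable r' (witness_constr r) (witness_csp r)"
  shows "r' = r"
proof (rule rule_premise_subset_imp_eq)
  show kind: "rule_kind r' = rule_kind r"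
    using assms by (simp add: applicable_iff witness_constr_def)
  show "set (rule_premise r') \<subseteq> set (rule_premise r)"
  proof clarify
    fix i s
    assume "(i, s) \<in> set (rule_premise r')"
    moreover from this have "i < arity (rule_kind r)"
      using rule_premise_wf [of r'] kind by auto
    ultimately have "premise_domain r i = {s}"
      using assms by (auto simp: applicable_iff witness_csp_def witness_constr_def)
    then show "(i, s) \<in> set (rule_premise r)"
      by (rule premise_domain_singleton)
  qed
qed

lemma witness_csp_not_hyper_arc_consistent: "\<not> hyper_arc_consistent (witness_csp r)"
proof
  assume hac: "hyper_arc_consistent (witness_csp r)"
  obtain j v where jv: "(j, v) \<in> set (rule_conclusion r)"
    and j: "j < arity (rule_kind r)" "j \<notin> fst ` set (rule_premise r)"
    using rule_conclusion_outside_premise [of r] by blast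
  have "map_of (rule_premise r) j = None"
    using j(2) by (simp add: map_of_eq_None_iff)
  then have "(\<not> v) \<in> dom (witness_csp r) (snd (witness_constr r) ! j)"
    using j(1) by (simp add: witness_csp_def witness_constr_def premise_domain_def)
  moreover have "witness_constr r \<in> cons (witness_csp r)" "j < length (snd (witness_constr r))"
    using j(1) by (simp_all add: witness_csp_def witness_constr_def)
  ultimately obtain t where t: "t \<in> crel (fst (witness_constr r))" "t ! j = (\<not> v)"
    and dom_t: "t \<in> dom_tuples (dom (witness_csp r)) (witness_constr r)"
    using hac unfolding hyper_arc_consistent_def by blast
  have "t ! i = s" if "(i, s) \<in> set (rule_premise r)" for i s
  proof -
    have "i < arity (rule_kind r)"
      using that rule_premise_wf [of r] by auto
    moreover have "map_of (rule_premise r) i = Some s"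
      using that rule_premise_wf [of r] by simp
    ultimately show ?thesis
      using dom_t by (auto simp: dom_tuples_def witness_csp_def witness_constr_def premise_domain_def)
  qed
  moreover have "t \<in> crel (rule_kind r)"
    using t(1) by (simp add: witness_constr_def)
  ultimately have "t ! j = v"
    using rule_sound jv by blast
  with t(2) show False
    by simp
qed

lemma witness_csp_closed:
  assumes "r' \<noteq> r"
  shows "closed_under r' (witness_csp r)"
proof -
  have cons: "cons (witness_csp r) = {witness_constr r}"
    by (simp add: witness_csp_def)
  have "\<not> solved (dom (witness_csp r)) (witness_constr r)"
    using hyper_arc_consistent_if_solved [OF witness_csp_wf [of r] witness_csp_not_failed [of r]]
      witness_csp_not_hyper_arc_consistent [of r] cons
    by auto
  then show ?thesis
    using closed_under_single_unsolved [OF cons] witness_csp_only_applicable assms by blast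
qed

lemma witness_csp_AND4:
  "witness_csp AND4 = \<lparr>vars = {0, 1, 2}, cons = {(CAnd, [0, 1, 2])},
     dom = (\<lambda>v. if v = 0 then {False} else UNIV)\<rparr>"
  by (auto simp: witness_csp_def witness_constr_def premise_domain_def rule_kind_def
      rule_premise_def upt_rec fun_eq_iff)

theorem mainTheorem6:
  shows "(\<forall>r. \<exists>P. wf_csp P \<and> \<not> failed P \<and> (\<forall>r'. r' \<noteq> r \<longrightarrow> closed_under r' P)
                \<and> \<not> hyper_arc_consistent P)
    \<and> (let P = \<lparr>vars = {0, 1, 2}, cons = {(CAnd, [0, 1, 2])},
                dom = (\<lambda>v. if v = 0 then {False} else UNIV)\<rparr>
       in wf_csp P \<and> \<not> failed P \<and> (\<forall>r'. r' \<noteq> AND4 \<longrightarrow> closed_under r' P)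
          \<and> \<not> hyper_arc_consistent P)"
proof -
  have "wf_csp (witness_csp r) \<and> \<not> failed (witness_csp r)
      \<and> (\<forall>r'. r' \<noteq> r \<longrightarrow> closed_under r' (witness_csp r))
      \<and> \<not> hyper_arc_consistent (witness_csp r)" for r
    using witness_csp_wf witness_csp_not_failed witness_csp_closed
      witness_csp_not_hyper_arc_consistent by blast
  then show ?thesis
    unfolding Let_def witness_csp_AND4 [symmetric] by blast
qed

end
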